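(* Let $A\in\mathbb{R}^{m\times N}$, $K\subseteq[N]$, $0<\rho<1$ and $\tau>0$. The following are equivalent: (i) $A$ satisfies the robust binary null space property with constants $\rho,\tau$ relative to $K$; (ii) for all $x,z\in\mathbb{R}^N$ with $z-x\in H_K$, $\sum_{i\in K}x_i-\sum_{i\in K}z_i\le \rho\|(z-x)_{K^C}\|_1+\tau\|A(z-x)\|_2$; (iii) for all $z\in[0,1]^N$, $|K|-\|z_K\|_1\le\rho\|z_{K^C}\|_1+\tau\|A(z-\mathbb{1}_K)\|_2$.
   Context: $K^C=[N]\setminus K$; for $w\in\mathbb{R}^N$ and $S\subseteq[N]$, $w_S$ agrees with $w$ on $S$ and is zero elsewhere; $\mathbb{1}_K$ has entries $1$ on $K$, $0$ elsewhere. $H_K=\{w\in\mathbb{R}^N: w_i\le 0 \text{ for } i\in K,\ w_i\ge 0\text{ for } i\in K^C\}$. $A$ satisfies the robust binary null space property with constants $\rho,\tau$ relative to $K$ if $-\sum_{i\in K}v_i\le\rho\sum_{i\in K^C}v_i+\tau\|Av\|_2$ for every $v\in H_K$. *)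

theory Defs
  imports "HOL-Analysis.Analysis"
begin

text \<open>Index set [N] is the finite type 'n; R^N is real^'n, A in R^(m x N) is real^'n^'m.\<close>

definition restrict_vec :: "real^'n \<Rightarrow> 'n set \<Rightarrow> real^'n" where
  "restrict_vec w S = (\<chi> i. if i \<in> S then w $ i else 0)"

definition indicator_vec :: "'n set \<Rightarrow> real^'n" where
  "indicator_vec K = (\<chi> i. if i \<in> K then 1 else 0)"

definition l1norm :: "real^'n \<Rightarrow> real" where
  "l1norm w = (\<Sum>i\<in>UNIV. \<bar>w $ i\<bar>)"

definition H_set :: "'n set \<Rightarrow> (real^'n) set" where
  "H_set K = {w. (\<forall>i\<in>K. w $ i \<le> 0) \<and> (\<forall>i\<in>-K. w $ i \<ge> 0)}"

definition robust_binary_nsp :: "real^'n^'m \<Rightarrow> real \<Rightarrow> real \<Rightarrow> 'n set \<Rightarrow> bool" where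
  "robust_binary_nsp A \<rho> \<tau> K \<longleftrightarrow>
     (\<forall>v\<in>H_set K. - (\<Sum>i\<in>K. v $ i) \<le> \<rho> * (\<Sum>i\<in>-K. v $ i) + \<tau> * norm (A *v v))"

end

theory Submission
  imports Defs
begin

text \<open>Both sides of the null space inequality are positively homogeneous in \<open>v\<close> and \<open>H\<^sub>K\<close> is a cone,
  so it suffices to check the inequality on \<open>H\<^sub>K \<inter> [-1,1]\<^sup>N\<close>. The translation \<open>v \<mapsto> v + \<one>\<^sub>K\<close> maps this
  set onto \<open>[0,1]\<^sup>N\<close> and turns the inequality into (iii); (ii) is the inequality at \<open>v = z - x\<close>.\<close>

definition binary_nsp_ineq :: "real^'n^'m \<Rightarrow> real \<Rightarrow> real \<Rightarrow> 'n set \<Rightarrow> real^'n \<Rightarrow> bool" where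
  "binary_nsp_ineq A \<rho> \<tau> K v \<longleftrightarrow>
     - (\<Sum>i\<in>K. v $ i) \<le> \<rho> * (\<Sum>i\<in>-K. v $ i) + \<tau> * norm (A *v v)"

lemma robust_binary_nsp_iff_ineq:
  "robust_binary_nsp A \<rho> \<tau> K \<longleftrightarrow> (\<forall>v\<in>H_set K. binary_nsp_ineq A \<rho> \<tau> K v)"
  unfolding robust_binary_nsp_def binary_nsp_ineq_def ..

lemma l1norm_restrict_vec: "l1norm (restrict_vec w S) = (\<Sum>i\<in>S. \<bar>w $ i\<bar>)"
proof -
  have "l1norm (restrict_vec w S) = (\<Sum>i\<in>UNIV. if i \<in> S then \<bar>w $ i\<bar> else 0)"
    unfolding l1norm_def restrict_vec_def by (intro sum.cong) auto
  then show ?thesis by (simp add: sum.If_cases)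
qed

lemma H_set_sum_compl_eq_l1norm:
  assumes "v \<in> H_set K"
  shows "(\<Sum>i\<in>-K. v $ i) = l1norm (restrict_vec v (-K))"
  unfolding l1norm_restrict_vec using assms by (intro sum.cong) (auto simp: H_set_def)

lemma H_set_scaleR: "0 \<le> c \<Longrightarrow> v \<in> H_set K \<Longrightarrow> c *\<^sub>R v \<in> H_set K"
  by (auto simp: H_set_def mult_nonneg_nonpos)

lemma binary_nsp_ineq_scaleR:
  assumes c: "0 < c"
  shows "binary_nsp_ineq A \<rho> \<tau> K (c *\<^sub>R v) \<longleftrightarrow> binary_nsp_ineq A \<rho> \<tau> K v"
proof -
  have "- (\<Sum>i\<in>K. (c *\<^sub>R v) $ i) = c * - (\<Sum>i\<in>K. v $ i)"
    by (simp add: sum_distrib_left)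
  moreover have "\<rho> * (\<Sum>i\<in>-K. (c *\<^sub>R v) $ i) + \<tau> * norm (A *v (c *\<^sub>R v))
               = c * (\<rho> * (\<Sum>i\<in>-K. v $ i) + \<tau> * norm (A *v v))"
    using c by (simp add: matrix_vector_mult_scaleR sum_distrib_left algebra_simps)
  ultimately show ?thesis
    unfolding binary_nsp_ineq_def using c by (simp only: mult_le_cancel_left_pos)
qed

lemma robust_binary_nsp_iff_unit_box:
  fixes A :: "real^'n^'m"
  shows "robust_binary_nsp A \<rho> \<tau> K \<longleftrightarrow>
     (\<forall>v\<in>H_set K. (\<forall>i. \<bar>v $ i\<bar> \<le> 1) \<longrightarrow> binary_nsp_ineq A \<rho> \<tau> K v)"
  unfolding robust_binary_nsp_iff_ineq
proof (intro iffI ballI)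
  fix v :: "real^'n"
  assume box: "\<forall>v\<in>H_set K. (\<forall>i. \<bar>v $ i\<bar> \<le> 1) \<longrightarrow> binary_nsp_ineq A \<rho> \<tau> K v"
    and v: "v \<in> H_set K"
  define t where "t = 1 + l1norm v"
  have t: "0 < t"
    unfolding t_def l1norm_def by (smt (verit) sum_nonneg abs_ge_zero)
  have "\<bar>v $ i\<bar> \<le> t" for i
    using member_le_sum[of i UNIV "\<lambda>i. \<bar>v $ i\<bar>"] unfolding t_def l1norm_def by simp
  then have "\<bar>(inverse t *\<^sub>R v) $ i\<bar> \<le> 1" for i
    using t by (simp add: field_simps)
  moreover have "inverse t *\<^sub>R v \<in> H_set K"
    using t v by (simp add: H_set_scaleR)
  ultimately have "binary_nsp_ineq A \<rho> \<tau> K (inverse t *\<^sub>R v)"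
    using box by blast
  then show "binary_nsp_ineq A \<rho> \<tau> K v"
    using t by (simp add: binary_nsp_ineq_scaleR)
qed blast

lemma unit_cube_iff_shifted_H_set:
  "(\<forall>i. 0 \<le> z $ i \<and> z $ i \<le> 1) \<longleftrightarrow>
     z - indicator_vec K \<in> H_set K \<and> (\<forall>i. \<bar>(z - indicator_vec K) $ i\<bar> \<le> 1)"
  by (auto simp: H_set_def indicator_vec_def)

lemma binary_nsp_ineq_diff:
  assumes "z - x \<in> H_set K"
  shows "binary_nsp_ineq A \<rho> \<tau> K (z - x) \<longleftrightarrow>
     (\<Sum>i\<in>K. x $ i) - (\<Sum>i\<in>K. z $ i)
       \<le> \<rho> * l1norm (restrict_vec (z - x) (-K)) + \<tau> * norm (A *v (z - x))"
  using H_set_sum_compl_eq_l1norm[OF assms]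
  by (simp add: binary_nsp_ineq_def sum_subtractf)

lemma binary_nsp_ineq_shifted_cube:
  assumes z: "\<forall>i. 0 \<le> z $ i \<and> z $ i \<le> 1"
  shows "binary_nsp_ineq A \<rho> \<tau> K (z - indicator_vec K) \<longleftrightarrow>
     real (card K) - l1norm (restrict_vec z K)
       \<le> \<rho> * l1norm (restrict_vec z (-K)) + \<tau> * norm (A *v (z - indicator_vec K))"
proof -
  have "(\<Sum>i\<in>K. (z - indicator_vec K) $ i) = (\<Sum>i\<in>K. z $ i) - real (card K)"
    by (simp add: indicator_vec_def sum_subtractf)
  moreover have "(\<Sum>i\<in>-K. (z - indicator_vec K) $ i) = l1norm (restrict_vec z (-K))"
    unfolding l1norm_restrict_vec using z by (intro sum.cong) (auto simp: indicator_vec_def)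
  moreover have "l1norm (restrict_vec z K) = (\<Sum>i\<in>K. z $ i)"
    unfolding l1norm_restrict_vec using z by simp
  ultimately show ?thesis
    by (simp add: binary_nsp_ineq_def)
qed

lemma robust_binary_nsp_iff_differences:
  fixes A :: "real^'n^'m"
  shows "robust_binary_nsp A \<rho> \<tau> K \<longleftrightarrow>
     (\<forall>x z :: real^'n. z - x \<in> H_set K \<longrightarrow> binary_nsp_ineq A \<rho> \<tau> K (z - x))"
  unfolding robust_binary_nsp_iff_ineq by (metis diff_zero)

lemma robust_binary_nsp_iff_unit_cube:
  fixes A :: "real^'n^'m"
  shows "robust_binary_nsp A \<rho> \<tau> K \<longleftrightarrow>
     (\<forall>z :: real^'n. (\<forall>i. 0 \<le> z $ i \<and> z $ i \<le> 1) \<longrightarrow>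
        binary_nsp_ineq A \<rho> \<tau> K (z - indicator_vec K))"
  unfolding robust_binary_nsp_iff_unit_box
proof (intro iffI allI impI ballI)
  fix z :: "real^'n"
  assume "\<forall>v\<in>H_set K. (\<forall>i. \<bar>v $ i\<bar> \<le> 1) \<longrightarrow> binary_nsp_ineq A \<rho> \<tau> K v"
    and "\<forall>i. 0 \<le> z $ i \<and> z $ i \<le> 1"
  then show "binary_nsp_ineq A \<rho> \<tau> K (z - indicator_vec K)"
    using unit_cube_iff_shifted_H_set[of z K] by blast
next
  fix v :: "real^'n"
  assume "\<forall>z :: real^'n. (\<forall>i. 0 \<le> z $ i \<and> z $ i \<le> 1) \<longrightarrow>
            binary_nsp_ineq A \<rho> \<tau> K (z - indicator_vec K)"
    and "v \<in> H_set K" and "\<forall>i. \<bar>v $ i\<bar> \<le> 1"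
  then show "binary_nsp_ineq A \<rho> \<tau> K v"
    using unit_cube_iff_shifted_H_set[of "v + indicator_vec K" K] by (metis add_diff_cancel)
qed

theorem lemma2p12:
  fixes A :: "real^'n^'m" and K :: "'n set" and \<rho> \<tau> :: real
  assumes "0 < \<rho>" and "\<rho> < 1" and "0 < \<tau>"
  shows "(robust_binary_nsp A \<rho> \<tau> K
          \<longleftrightarrow> (\<forall>x z :: real^'n. z - x \<in> H_set K \<longrightarrow>
                (\<Sum>i\<in>K. x $ i) - (\<Sum>i\<in>K. z $ i)
                  \<le> \<rho> * l1norm (restrict_vec (z - x) (-K)) + \<tau> * norm (A *v (z - x))))
       \<and> (robust_binary_nsp A \<rho> \<tau> K
          \<longleftrightarrow> (\<forall>z :: real^'n. (\<forall>i. 0 \<le> z $ i \<and> z $ i \<le> 1) \<longrightarrow>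
                real (card K) - l1norm (restrict_vec z K)
                  \<le> \<rho> * l1norm (restrict_vec z (-K)) + \<tau> * norm (A *v (z - indicator_vec K))))"
proof
  show "robust_binary_nsp A \<rho> \<tau> K \<longleftrightarrow> (\<forall>x z :: real^'n. z - x \<in> H_set K \<longrightarrow>
                (\<Sum>i\<in>K. x $ i) - (\<Sum>i\<in>K. z $ i)
                  \<le> \<rho> * l1norm (restrict_vec (z - x) (-K)) + \<tau> * norm (A *v (z - x)))"
    unfolding robust_binary_nsp_iff_differences using binary_nsp_ineq_diff by blast
  show "robust_binary_nsp A \<rho> \<tau> K \<longleftrightarrow> (\<forall>z :: real^'n. (\<forall>i. 0 \<le> z $ i \<and> z $ i \<le> 1) \<longrightarrow>
                real (card K) - l1norm (restrict_vec z K)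
                  \<le> \<rho> * l1norm (restrict_vec z (-K)) + \<tau> * norm (A *v (z - indicator_vec K)))"
    unfolding robust_binary_nsp_iff_unit_cube using binary_nsp_ineq_shifted_cube by blast
qed

end
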